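(* Let $K$ be a field of characteristic zero, $x=(x_1,\dots,x_n)$, and let $f\in K[x]$ with $\deg f\neq 1$. Fix an index $i$ and suppose that $h:=f-x_i$ is a polynomial in a linear form, i.e. $h=q(\ell)$ for some $q\in K[t]$ and some linear form $\ell\in K[x]$. If $h\in K[x_i]$, then $f$ is not a component of a Keller map. If $h\notin K[x_i]$, then $f$ is a tame coordinate.
   Context: A Keller map is a polynomial map $F\in K[x]^n$ with $\det\mathcal{J}F\in K^{*}$. A polynomial $f$ is a tame coordinate if it is a component of a tame automorphism of $K[x]$, i.e. of an invertible polynomial map that is a composition of invertible linear (affine) maps and elementary maps $(x_1+p(x_2,\dots,x_n),x_2,\dots,x_n)$. *)

theory Defs
  imports "HOL-Library.Poly_Mapping" "HOL-Computational_Algebra.Polynomial"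
          "HOL-Combinatorics.Permutations"
begin

text \<open>The variables
  x_1..x_n of the paper are the indices 0..n-1 here.\<close>

type_synonym 'a mpoly = "(nat \<Rightarrow>\<^sub>0 nat) \<Rightarrow>\<^sub>0 'a"

definition mvar :: "nat \<Rightarrow> 'a::comm_ring_1 mpoly" where
  "mvar i = Poly_Mapping.single (Poly_Mapping.single i 1) 1"

definition mconst :: "'a::comm_ring_1 \<Rightarrow> 'a mpoly" where
  "mconst c = Poly_Mapping.single 0 c"

definition vars_in :: "nat set \<Rightarrow> 'a::zero mpoly \<Rightarrow> bool" where
  "vars_in V p \<longleftrightarrow> (\<forall>m\<in>Poly_Mapping.keys p. Poly_Mapping.keys m \<subseteq> V)"

text \<open>total degree (the zero polynomial gets degree 0)\<close>
definition mon_deg :: "(nat \<Rightarrow>\<^sub>0 nat) \<Rightarrow> nat" where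
  "mon_deg m = (\<Sum>i\<in>Poly_Mapping.keys m. Poly_Mapping.lookup m i)"

definition total_deg :: "'a::zero mpoly \<Rightarrow> nat" where
  "total_deg p = Max (insert 0 (mon_deg ` Poly_Mapping.keys p))"

definition msubst :: "(nat \<Rightarrow> 'a::comm_ring_1 mpoly) \<Rightarrow> 'a mpoly \<Rightarrow> 'a mpoly" where
  "msubst \<sigma> p = (\<Sum>m\<in>Poly_Mapping.keys p. mconst (Poly_Mapping.lookup p m) * (\<Prod>i\<in>Poly_Mapping.keys m. \<sigma> i ^ Poly_Mapping.lookup m i))"

definition mpderiv :: "nat \<Rightarrow> 'a::comm_ring_1 mpoly \<Rightarrow> 'a mpoly" where
  "mpderiv i p = (\<Sum>m\<in>Poly_Mapping.keys p.
      Poly_Mapping.single (m - Poly_Mapping.single i 1) (of_nat (Poly_Mapping.lookup m i) * Poly_Mapping.lookup p m))"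

definition poly_map :: "nat \<Rightarrow> (nat \<Rightarrow> 'a::comm_ring_1 mpoly) \<Rightarrow> bool" where
  "poly_map n F \<longleftrightarrow> (\<forall>j<n. vars_in {..<n} (F j))"

definition jac_det :: "nat \<Rightarrow> (nat \<Rightarrow> 'a::comm_ring_1 mpoly) \<Rightarrow> 'a mpoly" where
  "jac_det n F = (\<Sum>p | p permutes {..<n}.
      of_int (sign p) * (\<Prod>j<n. mpderiv (p j) (F j)))"

definition keller_map :: "nat \<Rightarrow> (nat \<Rightarrow> 'a::field mpoly) \<Rightarrow> bool" where
  "keller_map n F \<longleftrightarrow> poly_map n F \<and> (\<exists>c. c \<noteq> 0 \<and> jac_det n F = mconst c)"

definition keller_component :: "nat \<Rightarrow> 'a::field mpoly \<Rightarrow> bool" where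
  "keller_component n f \<longleftrightarrow> (\<exists>F j. keller_map n F \<and> j < n \<and> F j = f)"

definition pm_comp :: "(nat \<Rightarrow> 'a::comm_ring_1 mpoly) \<Rightarrow> (nat \<Rightarrow> 'a mpoly) \<Rightarrow> nat \<Rightarrow> 'a mpoly" where
  "pm_comp F G = (\<lambda>j. msubst G (F j))"

definition affine_auto :: "nat \<Rightarrow> (nat \<Rightarrow> 'a::field mpoly) \<Rightarrow> bool" where
  "affine_auto n F \<longleftrightarrow> (\<exists>A b.
      (\<Sum>p | p permutes {..<n}. of_int (sign p) * (\<Prod>j<n. A j (p j))) \<noteq> (0::'a) \<and>
      (\<forall>j<n. F j = (\<Sum>k<n. mconst (A j k) * mvar k) + mconst (b j)) \<and>
      (\<forall>j\<ge>n. F j = mvar j))"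

definition elementary :: "nat \<Rightarrow> (nat \<Rightarrow> 'a::field mpoly) \<Rightarrow> bool" where
  "elementary n F \<longleftrightarrow> 0 < n \<and> (\<exists>p. vars_in {1..<n} p \<and>
      F 0 = mvar 0 + p \<and> (\<forall>j. j \<noteq> 0 \<longrightarrow> F j = mvar j))"

inductive tame :: "nat \<Rightarrow> (nat \<Rightarrow> 'a::field mpoly) \<Rightarrow> bool" for n where
  tame_affine: "affine_auto n F \<Longrightarrow> tame n F"
| tame_elem: "elementary n F \<Longrightarrow> tame n F"
| tame_comp: "tame n F \<Longrightarrow> tame n G \<Longrightarrow> tame n (pm_comp F G)"

definition tame_coordinate :: "nat \<Rightarrow> 'a::field mpoly \<Rightarrow> bool" where
  "tame_coordinate n f \<longleftrightarrow> (\<exists>F j. tame n F \<and> j < n \<and> F j = f)"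

end

theory Submission
  imports Defs
begin

text \<open>If \<open>h\<close> only involves \<open>x\<^sub>i\<close>, then so does \<open>f\<close>, and in the Leibniz expansion of the
  Jacobian determinant of any map with component \<open>f\<close> only the terms containing
  \<open>\<partial>f/\<partial>x\<^sub>i\<close> survive; hence \<open>\<partial>f/\<partial>x\<^sub>i\<close> divides the constant Jacobian determinant, which forces \<open>deg f = 1\<close>.
  Otherwise the linear form \<open>\<ell>\<close> has a nonzero coefficient at some \<open>x\<^sub>k\<close> with \<open>k \<noteq> i\<close>, and
  \<open>f = x\<^sub>i + q(\<ell>)\<close> is the first component of an elementary map \<open>(x\<^sub>0 + q(x\<^sub>1), x\<^sub>1, \<dots>)\<close>
  precomposed with an affine change of variables sending \<open>x\<^sub>0 \<mapsto> x\<^sub>i\<close> and \<open>x\<^sub>1 \<mapsto> \<ell>\<close>.\<close>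

definition mpoly_hom :: "('a::comm_ring_1 \<Rightarrow> 'b::comm_ring_1) \<Rightarrow> ((nat \<Rightarrow>\<^sub>0 nat) \<Rightarrow> 'b) \<Rightarrow> 'a mpoly \<Rightarrow> 'b" where
  "mpoly_hom e w p = (\<Sum>m\<in>Poly_Mapping.keys p. e (Poly_Mapping.lookup p m) * w m)"

lemma mpoly_hom_keys_superset:
  assumes "e 0 = 0" "finite S" "Poly_Mapping.keys p \<subseteq> S"
  shows "mpoly_hom e w p = (\<Sum>m\<in>S. e (Poly_Mapping.lookup p m) * w m)"
  unfolding mpoly_hom_def
  by (rule sum.mono_neutral_left) (use assms in \<open>auto simp: in_keys_iff\<close>)

lemma mpoly_hom_zero: "mpoly_hom e w 0 = 0"
  by (simp add: mpoly_hom_def)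

lemma mpoly_hom_single:
  assumes "e 0 = 0"
  shows "mpoly_hom e w (Poly_Mapping.single m a) = e a * w m"
  using assms by (simp add: mpoly_hom_def)

lemma mpoly_hom_add:
  assumes "e 0 = 0" "\<And>a b. e (a + b) = e a + e b"
  shows "mpoly_hom e w (p + q) = mpoly_hom e w p + mpoly_hom e w q"
proof -
  let ?S = "Poly_Mapping.keys p \<union> Poly_Mapping.keys q"
  have "mpoly_hom e w (p + q) = (\<Sum>m\<in>?S. e (Poly_Mapping.lookup (p + q) m) * w m)"
    using keys_add[of p q] by (intro mpoly_hom_keys_superset assms) auto
  also have "\<dots> = (\<Sum>m\<in>?S. e (Poly_Mapping.lookup p m) * w m)
                 + (\<Sum>m\<in>?S. e (Poly_Mapping.lookup q m) * w m)"
    by (simp add: lookup_add assms(2) distrib_right sum.distrib)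
  also have "\<dots> = mpoly_hom e w p + mpoly_hom e w q"
    using assms(1) by (simp add: mpoly_hom_keys_superset[of e ?S])
  finally show ?thesis .
qed

lemma mpoly_hom_sum:
  assumes "e 0 = 0" "\<And>a b. e (a + b) = e a + e b"
  shows "mpoly_hom e w (\<Sum>x\<in>A. f x) = (\<Sum>x\<in>A. mpoly_hom e w (f x))"
  by (induction A rule: infinite_finite_induct) (auto simp: mpoly_hom_zero mpoly_hom_add[OF assms])

lemma poly_mapping_sum_single_lookup:
  "p = (\<Sum>m\<in>Poly_Mapping.keys p. Poly_Mapping.single m (Poly_Mapping.lookup p m))"
  by (rule poly_mapping_eqI)
    (auto simp: lookup_sum lookup_single when_def in_keys_iff intro: sum.neutral)

lemma mpoly_hom_mult:
  assumes e0: "e 0 = 0" and e_add: "\<And>a b. e (a + b) = e a + e b"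
    and e_mult: "\<And>a b. e (a * b) = e a * e b" and w_add: "\<And>m m'. w (m + m') = w m * w m'"
  shows "mpoly_hom e w (p * q) = mpoly_hom e w p * mpoly_hom e w q"
proof -
  have "p * q = (\<Sum>m\<in>Poly_Mapping.keys p. \<Sum>m'\<in>Poly_Mapping.keys q.
      Poly_Mapping.single (m + m') (Poly_Mapping.lookup p m * Poly_Mapping.lookup q m'))"
    by (subst (1 2) poly_mapping_sum_single_lookup) (simp add: sum_product mult_single)
  then have "mpoly_hom e w (p * q) = (\<Sum>m\<in>Poly_Mapping.keys p. \<Sum>m'\<in>Poly_Mapping.keys q.
      e (Poly_Mapping.lookup p m) * w m * (e (Poly_Mapping.lookup q m') * w m'))"
    by (simp add: mpoly_hom_sum[where e=e, OF e0 e_add] mpoly_hom_single[where e=e, OF e0] e_mult w_add mult_ac)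
  also have "\<dots> = mpoly_hom e w p * mpoly_hom e w q"
    unfolding mpoly_hom_def by (simp add: sum_product)
  finally show ?thesis .
qed

lemma mconst_0: "mconst 0 = 0"
  by (simp add: mconst_def)

lemma mconst_1: "mconst 1 = 1"
  by (simp add: mconst_def)

lemma mconst_add: "mconst (a + b) = mconst a + mconst b"
  by (simp add: mconst_def single_add)

lemma mconst_mult: "mconst (a * b) = mconst a * mconst b"
  by (simp add: mconst_def mult_single)

text \<open>Specialising every variable other than \<open>x\<^sub>i\<close> to \<open>1\<close>; this commutes with \<open>\<partial>/\<partial>x\<^sub>i\<close>.\<close>

definition mpoly_univ :: "nat \<Rightarrow> 'a::comm_ring_1 mpoly \<Rightarrow> 'a poly" where
  "mpoly_univ i = mpoly_hom (\<lambda>a. [:a:]) (\<lambda>m. monom 1 (Poly_Mapping.lookup m i))"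

lemma mpoly_univ_sum: "mpoly_univ i (\<Sum>x\<in>A. f x) = (\<Sum>x\<in>A. mpoly_univ i (f x))"
  unfolding mpoly_univ_def by (rule mpoly_hom_sum) auto

lemma mpoly_univ_mult: "mpoly_univ i (p * q) = mpoly_univ i p * mpoly_univ i q"
  unfolding mpoly_univ_def by (rule mpoly_hom_mult) (auto simp: lookup_add mult_monom)

lemma mpoly_univ_single: "mpoly_univ i (Poly_Mapping.single m a) = monom a (Poly_Mapping.lookup m i)"
  unfolding mpoly_univ_def by (subst mpoly_hom_single) (auto simp: smult_monom)

lemma mpoly_univ_mconst: "mpoly_univ i (mconst a) = [:a:]"
  by (simp add: mconst_def mpoly_univ_single monom_0)

lemma mpoly_univ_mpderiv: "mpoly_univ i (mpderiv i p) = pderiv (mpoly_univ i p)"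
proof -
  have "mpoly_univ i (mpderiv i p) = (\<Sum>m\<in>Poly_Mapping.keys p.
      monom (of_nat (Poly_Mapping.lookup m i) * Poly_Mapping.lookup p m) (Poly_Mapping.lookup m i - 1))"
    unfolding mpderiv_def mpoly_univ_sum mpoly_univ_single by (simp add: lookup_minus)
  also have "\<dots> = pderiv (mpoly_univ i p)"
    unfolding mpoly_univ_def mpoly_hom_def
    by (simp add: higher_pderiv_sum[of 1, simplified] smult_monom pderiv_monom)
  finally show ?thesis .
qed

lemma mpoly_univ_dvd: "p dvd q \<Longrightarrow> mpoly_univ i p dvd mpoly_univ i q"
  by (metis dvdE dvdI mpoly_univ_mult)

definition monom_subst :: "(nat \<Rightarrow> 'a::comm_ring_1 mpoly) \<Rightarrow> (nat \<Rightarrow>\<^sub>0 nat) \<Rightarrow> 'a mpoly" where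
  "monom_subst \<sigma> m = (\<Prod>i\<in>Poly_Mapping.keys m. \<sigma> i ^ Poly_Mapping.lookup m i)"

lemma monom_subst_keys_superset:
  assumes "finite S" "Poly_Mapping.keys m \<subseteq> S"
  shows "monom_subst \<sigma> m = (\<Prod>i\<in>S. \<sigma> i ^ Poly_Mapping.lookup m i)"
  unfolding monom_subst_def
  by (rule prod.mono_neutral_left) (use assms in \<open>auto simp: in_keys_iff\<close>)

lemma monom_subst_add: "monom_subst \<sigma> (m + m') = monom_subst \<sigma> m * monom_subst \<sigma> m'"
proof -
  let ?S = "Poly_Mapping.keys m \<union> Poly_Mapping.keys m'"
  have "monom_subst \<sigma> (m + m') = (\<Prod>i\<in>?S. \<sigma> i ^ Poly_Mapping.lookup (m + m') i)"
    using keys_add[of m m'] by (intro monom_subst_keys_superset) auto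
  also have "\<dots> = (\<Prod>i\<in>?S. \<sigma> i ^ Poly_Mapping.lookup m i) * (\<Prod>i\<in>?S. \<sigma> i ^ Poly_Mapping.lookup m' i)"
    by (simp add: lookup_add power_add prod.distrib)
  also have "\<dots> = monom_subst \<sigma> m * monom_subst \<sigma> m'"
    by (simp add: monom_subst_keys_superset[of ?S])
  finally show ?thesis .
qed

lemma msubst_eq_mpoly_hom: "msubst \<sigma> = mpoly_hom mconst (monom_subst \<sigma>)"
  by (simp add: fun_eq_iff msubst_def mpoly_hom_def monom_subst_def)

lemma msubst_add: "msubst \<sigma> (p + q) = msubst \<sigma> p + msubst \<sigma> q"
  unfolding msubst_eq_mpoly_hom by (rule mpoly_hom_add) (auto simp: mconst_0 mconst_add)

lemma msubst_mult: "msubst \<sigma> (p * q) = msubst \<sigma> p * msubst \<sigma> q"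
  unfolding msubst_eq_mpoly_hom
  by (rule mpoly_hom_mult) (auto simp: mconst_0 mconst_add mconst_mult monom_subst_add)

lemma msubst_single: "msubst \<sigma> (Poly_Mapping.single m a) = mconst a * monom_subst \<sigma> m"
  unfolding msubst_eq_mpoly_hom by (rule mpoly_hom_single) (simp add: mconst_0)

lemma msubst_mconst: "msubst \<sigma> (mconst a) = mconst a"
  by (simp add: mconst_def msubst_single[unfolded mconst_def] monom_subst_def)

lemma msubst_mvar: "msubst \<sigma> (mvar j) = \<sigma> j"
  by (simp add: mvar_def msubst_single mconst_1 monom_subst_def)

lemma msubst_zero: "msubst \<sigma> 0 = 0"
  by (simp add: msubst_def)

lemma msubst_poly: "msubst \<sigma> (poly (map_poly mconst q) x) = poly (map_poly mconst q) (msubst \<sigma> x)"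
  by (induction q) (auto simp: map_poly_pCons mconst_0 msubst_add msubst_mult msubst_mconst msubst_zero)

lemma vars_in_zero: "vars_in V 0"
  by (simp add: vars_in_def)

lemma vars_in_mconst: "vars_in V (mconst a)"
  by (simp add: vars_in_def mconst_def)

lemma vars_in_mvar: "j \<in> V \<Longrightarrow> vars_in V (mvar j)"
  by (simp add: vars_in_def mvar_def)

lemma vars_in_add: "vars_in V p \<Longrightarrow> vars_in V q \<Longrightarrow> vars_in V (p + q)"
  unfolding vars_in_def using keys_add[of p q] by blast

lemma vars_in_mult: "vars_in V p \<Longrightarrow> vars_in V q \<Longrightarrow> vars_in V (p * q)"
  unfolding vars_in_def using keys_mult[of p q] keys_add[where 'a=nat] by blast

lemma vars_in_sum: "(\<And>x. x \<in> A \<Longrightarrow> vars_in V (f x)) \<Longrightarrow> vars_in V (\<Sum>x\<in>A. f x)"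
  by (induction A rule: infinite_finite_induct) (auto simp: vars_in_zero vars_in_add)

lemma vars_in_poly: "vars_in V x \<Longrightarrow> vars_in V (poly (map_poly mconst q) x)"
  by (induction q)
    (auto simp: map_poly_pCons mconst_0 vars_in_add vars_in_mult vars_in_mconst vars_in_zero)

lemma vars_in_lookup_eq_0:
  "vars_in V f \<Longrightarrow> m \<in> Poly_Mapping.keys f \<Longrightarrow> j \<notin> V \<Longrightarrow> Poly_Mapping.lookup m j = 0"
  unfolding vars_in_def by (meson in_keys_iff subsetD)

lemma vars_in_singleton_keys:
  assumes "vars_in {i} f" "m \<in> Poly_Mapping.keys f"
  shows "m = Poly_Mapping.single i (Poly_Mapping.lookup m i)"
  by (rule poly_mapping_eqI)
    (use vars_in_lookup_eq_0[OF assms] in \<open>auto simp: lookup_single when_def\<close>)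

lemma mpderiv_eq_0_if_vars_in:
  assumes "vars_in V f" "k \<notin> V"
  shows "mpderiv k f = 0"
  unfolding mpderiv_def using vars_in_lookup_eq_0[OF assms(1) _ assms(2)]
  by (intro sum.neutral) simp

lemma coeff_mpoly_univ:
  assumes "vars_in {i} f"
  shows "coeff (mpoly_univ i f) k = Poly_Mapping.lookup f (Poly_Mapping.single i k)"
proof -
  have "coeff (mpoly_univ i f) k
      = (\<Sum>m\<in>Poly_Mapping.keys f. if Poly_Mapping.lookup m i = k then Poly_Mapping.lookup f m else 0)"
    unfolding mpoly_univ_def mpoly_hom_def coeff_sum by (intro sum.cong refl) (simp add: smult_monom)
  also have "\<dots> = (\<Sum>m\<in>Poly_Mapping.keys f. if m = Poly_Mapping.single i k then Poly_Mapping.lookup f m else 0)"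
    by (intro sum.cong refl) (metis vars_in_singleton_keys[OF assms] lookup_single_eq)
  also have "\<dots> = Poly_Mapping.lookup f (Poly_Mapping.single i k)"
    by (simp add: sum.delta in_keys_iff)
  finally show ?thesis .
qed

lemma total_deg_eq_degree_mpoly_univ:
  assumes f: "vars_in {i} f"
  shows "total_deg f = degree (mpoly_univ i f)"
proof -
  let ?P = "mpoly_univ i f"
  have "mon_deg ` Poly_Mapping.keys f = {k. coeff ?P k \<noteq> 0}"
  proof (intro equalityI subsetI)
    fix d assume "d \<in> mon_deg ` Poly_Mapping.keys f"
    then obtain m where m: "m \<in> Poly_Mapping.keys f" "d = mon_deg m" by blast
    define e where "e = Poly_Mapping.lookup m i"
    have "m = Poly_Mapping.single i e"
      unfolding e_def by (rule vars_in_singleton_keys[OF f m(1)])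
    then have "d = e" "coeff ?P e = Poly_Mapping.lookup f m"
      using m(2) by (simp_all add: mon_deg_def coeff_mpoly_univ[OF f])
    with m(1) show "d \<in> {k. coeff ?P k \<noteq> 0}"
      by (simp add: in_keys_iff)
  next
    fix k assume "k \<in> {k. coeff ?P k \<noteq> 0}"
    then have "Poly_Mapping.single i k \<in> Poly_Mapping.keys f"
      by (simp add: coeff_mpoly_univ[OF f] in_keys_iff)
    then show "k \<in> mon_deg ` Poly_Mapping.keys f"
      by (rule rev_image_eqI) (simp add: mon_deg_def)
  qed
  moreover have "Max (insert 0 {k. coeff ?P k \<noteq> 0}) = degree ?P"
    by (rule Max_eqI) (auto intro: le_degree finite_subset[of _ "{..degree ?P}"])
  ultimately show ?thesis
    by (simp add: total_deg_def)
qed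

lemma mpderiv_dvd_jac_det:
  assumes "j < n" and "\<And>k. k \<noteq> i \<Longrightarrow> mpderiv k (F j) = 0"
  shows "mpderiv i (F j) dvd jac_det n F"
  unfolding jac_det_def
proof (intro dvd_sum dvd_mult)
  fix p
  have "(\<Prod>k<n. mpderiv (p k) (F k)) = mpderiv (p j) (F j) * (\<Prod>k\<in>{..<n}-{j}. mpderiv (p k) (F k))"
    using assms(1) by (subst prod.remove[of _ j]) auto
  then show "mpderiv i (F j) dvd (\<Prod>k<n. mpderiv (p k) (F k))"
    using assms(2)[of "p j"] by (cases "p j = i") auto
qed

lemma degree_eq_1_if_pderiv_dvd_const:
  fixes P :: "'a::field_char_0 poly"
  assumes "pderiv P dvd [:c:]" and "c \<noteq> 0"
  shows "degree P = 1"
proof -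
  have "pderiv P \<noteq> 0"
    using assms by auto
  moreover have "degree (pderiv P) = 0"
    using dvd_imp_degree_le[OF assms(1)] assms(2) by simp
  ultimately show ?thesis
    by (simp add: degree_pderiv pderiv_eq_0_iff)
qed

lemma total_deg_eq_1_if_keller_component:
  fixes f :: "'a::field_char_0 mpoly"
  assumes f: "vars_in {i} f" and "keller_component n f"
  shows "total_deg f = 1"
proof -
  obtain F j c where F: "j < n" "F j = f" and c: "c \<noteq> 0" "jac_det n F = mconst c"
    using assms(2) unfolding keller_component_def keller_map_def by blast
  have "mpderiv i f dvd mconst c"
    using mpderiv_dvd_jac_det[of j n i F] F c mpderiv_eq_0_if_vars_in[OF f] by auto
  then have "pderiv (mpoly_univ i f) dvd [:c:]"
    by (metis mpoly_univ_dvd mpoly_univ_mpderiv mpoly_univ_mconst)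
  with c(1) show ?thesis
    by (simp add: total_deg_eq_degree_mpoly_univ[OF f] degree_eq_1_if_pderiv_dvd_const)
qed

lemma leibniz_sum_eq_single_perm:
  fixes A :: "nat \<Rightarrow> nat \<Rightarrow> 'a::comm_ring_1"
  assumes p0: "p0 permutes {..<n}"
    and others_vanish: "\<And>p. p permutes {..<n} \<Longrightarrow> p \<noteq> p0 \<Longrightarrow> (\<Prod>j<n. A j (p j)) = 0"
  shows "(\<Sum>p | p permutes {..<n}. of_int (sign p) * (\<Prod>j<n. A j (p j)))
       = of_int (sign p0) * (\<Prod>j<n. A j (p0 j))"
proof -
  have "finite {p. p permutes {..<n}}"
    by (rule finite_permutations) simp
  then have "(\<Sum>p | p permutes {..<n}. of_int (sign p) * (\<Prod>j<n. A j (p j)))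
      = of_int (sign p0) * (\<Prod>j<n. A j (p0 j))
        + (\<Sum>p\<in>{p. p permutes {..<n}} - {p0}. of_int (sign p) * (\<Prod>j<n. A j (p j)))"
    using p0 by (subst sum.remove[of _ p0]) auto
  also have "(\<Sum>p\<in>{p. p permutes {..<n}} - {p0}. of_int (sign p) * (\<Prod>j<n. A j (p j))) = 0"
    by (rule sum.neutral) (auto simp: others_vanish)
  finally show ?thesis
    by simp
qed

lemma permutes_eqI:
  assumes "p permutes S" "q permutes S" "\<And>x. x \<in> S \<Longrightarrow> p x = q x"
  shows "p = q"
  using assms by (metis permutes_not_in ext)

lemma sum_mconst_delta_mvar:
  assumes "t < n"
  shows "(\<Sum>m<n. mconst (if m = t then 1 else 0) * mvar m) = (mvar t :: 'a::comm_ring_1 mpoly)"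
proof -
  have "(\<Sum>m<n. mconst (if m = t then 1 else 0) * mvar m) = (\<Sum>m<n. if m = t then mvar m else (0::'a mpoly))"
    by (intro sum.cong) (simp_all add: mconst_0 mconst_1)
  with assms show ?thesis
    by simp
qed

lemma affine_auto_permute_vars:
  assumes \<tau>: "\<tau> permutes {..<n}"
  shows "affine_auto n (\<lambda>j. if j < n then mvar (\<tau> j) else (mvar j :: 'a::field mpoly))"
  unfolding affine_auto_def
proof (intro exI[of _ "\<lambda>j m. if m = \<tau> j then (1::'a) else 0"] exI[of _ "\<lambda>_. 0"] conjI allI impI)
  have "(\<Sum>p | p permutes {..<n}. of_int (sign p) * (\<Prod>j<n. if p j = \<tau> j then 1 else 0))
      = of_int (sign \<tau>) * (\<Prod>j<n. if \<tau> j = \<tau> j then 1 else (0::'a))"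
  proof (rule leibniz_sum_eq_single_perm[OF \<tau>])
    fix p assume p: "p permutes {..<n}" "p \<noteq> \<tau>"
    then obtain j where "j < n" "p j \<noteq> \<tau> j"
      using permutes_eqI[OF p(1) \<tau>] by blast
    then show "(\<Prod>j<n. if p j = \<tau> j then 1 else (0::'a)) = 0"
      by (intro prod_zero) auto
  qed
  then show "(\<Sum>p | p permutes {..<n}. of_int (sign p) * (\<Prod>j<n. if p j = \<tau> j then 1 else 0)) \<noteq> (0::'a)"
    by (simp add: sign_def)
next
  fix j assume j: "j < n"
  moreover have "\<tau> j < n"
    using permutes_in_image[OF \<tau>] j by simp
  ultimately show "(if j < n then mvar (\<tau> j) else mvar j)
      = (\<Sum>k<n. mconst (if k = \<tau> j then 1 else 0) * mvar k) + (mconst 0 :: 'a mpoly)"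
    by (simp add: sum_mconst_delta_mvar mconst_0)
qed simp

lemma affine_auto_replace_var:
  assumes k: "k < n" and "c k \<noteq> 0"
  shows "affine_auto n (\<lambda>j. if j = k then (\<Sum>j<n. mconst (c j) * mvar j) else (mvar j :: 'a::field mpoly))"
  unfolding affine_auto_def
proof (intro exI[of _ "\<lambda>j m. if j = k then c m else if m = j then 1 else 0"] exI[of _ "\<lambda>_. 0"]
    conjI allI impI)
  let ?A = "\<lambda>j m. if j = k then c m else if m = j then 1 else (0::'a)"
  have "(\<Sum>p | p permutes {..<n}. of_int (sign p) * (\<Prod>j<n. ?A j (p j)))
      = of_int (sign (id :: nat \<Rightarrow> nat)) * (\<Prod>j<n. ?A j (id j))"
  proof (rule leibniz_sum_eq_single_perm[OF permutes_id])
    fix p assume p: "p permutes {..<n}" "p \<noteq> id"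
    have "\<not> p permutes {k}"
      using p(2) by simp
    then obtain j where "j < n" "j \<noteq> k" "p j \<noteq> j"
      using permutes_superset[OF p(1), of "{k}"] by blast
    then show "(\<Prod>j<n. ?A j (p j)) = 0"
      by (intro prod_zero) auto
  qed
  also have "(\<Prod>j<n. ?A j (id j)) = c k"
    using k by (subst prod.remove[of _ k]) (auto intro: prod.neutral)
  finally show "(\<Sum>p | p permutes {..<n}. of_int (sign p) * (\<Prod>j<n. ?A j (p j))) \<noteq> 0"
    using assms(2) by simp
next
  fix j assume "j < n"
  then show "(if j = k then \<Sum>j<n. mconst (c j) * mvar j else mvar j)
      = (\<Sum>m<n. mconst (if j = k then c m else if m = j then 1 else 0) * mvar m) + (mconst 0 :: 'a mpoly)"
    by (cases "j = k") (simp_all add: mconst_0 sum_mconst_delta_mvar)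
qed (use k in auto)

text \<open>\<open>x\<^sub>i + q(\<ell>)\<close> is the first component of \<open>E \<circ> S \<circ> T\<close>, where \<open>E = (x\<^sub>0 + q(x\<^sub>1), x\<^sub>1, \<dots>)\<close>,
  the permutation \<open>S\<close> sends \<open>x\<^sub>0, x\<^sub>1\<close> to \<open>x\<^sub>i, x\<^sub>k\<close>, and \<open>T\<close> replaces \<open>x\<^sub>k\<close> by \<open>\<ell>\<close>.\<close>

lemma tame_coordinate_var_plus_poly_linear_form:
  fixes q :: "'a::field poly"
  assumes i: "i < n" and k: "k < n" "k \<noteq> i" "c k \<noteq> 0"
    and l: "l = (\<Sum>j<n. mconst (c j) * mvar j)"
  shows "tame_coordinate n (mvar i + poly (map_poly mconst q) l)"
proof -
  define Q where "Q = map_poly mconst q"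
  have n: "1 < n"
    using i k by linarith
  define k' where "k' = Transposition.transpose 0 i k"
  have k': "k' \<noteq> 0" "k' < n"
    using i k n by (auto simp: k'_def Transposition.transpose_def)
  define \<tau> where "\<tau> = Transposition.transpose 0 i \<circ> Transposition.transpose 1 k'"
  have \<tau>: "\<tau> permutes {..<n}" "\<tau> 0 = i" "\<tau> 1 = k"
    using i k' n by (auto simp: \<tau>_def k'_def intro!: permutes_compose permutes_swap_id)
  define E where "E = (\<lambda>j. if j = 0 then mvar 0 + poly Q (mvar 1) else (mvar j :: 'a mpoly))"
  define S where "S = (\<lambda>j. if j < n then mvar (\<tau> j) else (mvar j :: 'a mpoly))"
  define T where "T = (\<lambda>j. if j = k then l else (mvar j :: 'a mpoly))"
  have "elementary n E"
    unfolding elementary_def E_def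
    using n by (auto intro!: exI[of _ "poly Q (mvar 1)"] simp: Q_def vars_in_poly vars_in_mvar)
  moreover have "affine_auto n S"
    unfolding S_def by (rule affine_auto_permute_vars[OF \<tau>(1)])
  moreover have "affine_auto n T"
    unfolding T_def l by (rule affine_auto_replace_var[where c=c, OF k(1) k(3)])
  ultimately have "tame n (pm_comp (pm_comp E S) T)"
    by (intro tame.intros)
  moreover have "pm_comp (pm_comp E S) T 0 = mvar i + poly Q l"
    using n i k \<tau> by (simp add: pm_comp_def E_def S_def T_def Q_def msubst_add msubst_poly msubst_mvar)
  ultimately show ?thesis
    unfolding tame_coordinate_def Q_def using n by (intro exI[of _ "pm_comp (pm_comp E S) T"] exI[of _ 0]) auto
qed

lemma vars_in_linear_form:
  assumes "\<And>k. k < n \<Longrightarrow> k \<noteq> i \<Longrightarrow> c k = 0"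
  shows "vars_in {i} (\<Sum>j<n. mconst (c j) * mvar j)"
proof (rule vars_in_sum)
  fix j assume "j \<in> {..<n}"
  then show "vars_in {i} (mconst (c j) * mvar j)"
    using assms[of j]
    by (cases "j = i") (auto simp: mconst_0 vars_in_zero intro!: vars_in_mult vars_in_mconst vars_in_mvar)
qed

theorem proposition3p4:
  fixes n i :: nat and f h l :: "'a::field_char_0 mpoly" and q :: "'a poly"
    and c :: "nat \<Rightarrow> 'a"
  assumes f_poly: "vars_in {..<n} f"
    and deg: "total_deg f \<noteq> 1"
    and i: "i < n"
    and h_def: "h = f - mvar i"
    and ell: "l = (\<Sum>j<n. mconst (c j) * mvar j)"
    and hq: "h = poly (map_poly mconst q) l"
  shows "(vars_in {i} h \<longrightarrow> \<not> keller_component n f)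
       \<and> (\<not> vars_in {i} h \<longrightarrow> tame_coordinate n f)"
proof (intro conjI impI)
  have f: "f = mvar i + h"
    using h_def by simp
  {
    assume "vars_in {i} h"
    then have "vars_in {i} f"
      unfolding f by (intro vars_in_add vars_in_mvar) auto
    then show "\<not> keller_component n f"
      using total_deg_eq_1_if_keller_component deg by blast
  next
    assume "\<not> vars_in {i} h"
    then obtain k where "k < n" "k \<noteq> i" "c k \<noteq> 0"
      using vars_in_linear_form[of n i c] vars_in_poly[of "{i}" l q] hq ell by blast
    from tame_coordinate_var_plus_poly_linear_form[OF i this ell]
    show "tame_coordinate n f"
      using f hq by simp
  }
qed

end
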